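(* Let $\mathcal{D}$ be an abstract system of proof notations, $s\ge2$, and let $d\in\mathcal{D}$ be $s$-bounded in $\mathcal{D}$ with height $o(d)=h\ge2$. Then for all $k\ge1$, $\mathsf E^kd$ is $2_{k-1}(2\cdot h)\cdot s$-bounded in $\mathbb{E}(\mathcal{D})$, where $\mathsf E^kd$ denotes $\mathsf E\cdots\mathsf Ed$ with $k$ occurrences of $\mathsf E$.
   Context: An abstract system of proof notations is a set $\mathcal{D}$ with functions $|\cdot|,o(\cdot)\colon\mathcal{D}\to\mathbb{N}\setminus\{0\}$ (size and height) and a relation $\to\subseteq\mathcal{D}\times\mathcal{D}$ such that $d\to d'$ implies $o(d')<o(d)$. The cut-elimination closure $\mathbb{E}(\mathcal{D})$ is the abstract system of formal terms inductively generated by: every $d\in\mathcal{D}$ is in $\mathbb{E}(\mathcal{D})$ (with size and height inherited); if $d,e\in\mathbb{E}(\mathcal{D})$ then $\mathsf{I}d,\ \mathsf{R}de,\ \mathsf{E}d\in\mathbb{E}(\mathcal{D})$ ($\mathsf I,\mathsf R,\mathsf E$ new symbols), with $|\mathsf Id|=|d|+1$, $|\mathsf Rde|=|d|+|e|+1$, $|\mathsf Ed|=|d|+1$, $o(\mathsf Id)=o(d)$, $o(\mathsf Rde)=o(d)+o(e)$, $o(\mathsf Ed)=2^{o(d)}-1$. The relation $\to$ on $\mathbb{E}(\mathcal{D})$ is inductively generated by: $d\to d'$ in $\mathcal{D}$ implies $d\to d'$; $d\to d'$ implies $\mathsf Id\to\mathsf Id'$; $e\to e'$ implies $\mathsf Rde\to\mathsf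 Rde'$; $d\to d'$ implies $\mathsf Ed\to\mathsf Ed'$; $\mathsf Rde\to\mathsf Id$ always; and $d\to d'$ together with $d\to d''$ implies $\mathsf Ed\to\mathsf R(\mathsf Ed')(\mathsf Ed'')$. For an abstract system $\mathcal{X}$ (here $\mathcal{D}$ or $\mathbb{E}(\mathcal{D})$) and $x\in\mathcal{X}$, $x$ is called $t$-bounded in $\mathcal{X}$ if every $x'\in\mathcal{X}$ with $x\to^\ast x'$ (reflexive transitive closure of the relation $\to$ of $\mathcal{X}$) satisfies $|x'|\le t$. Iterated exponentiation: $2_0(x)=x$, $2_{n+1}(x)=2^{2_n(x)}$. *)

theory Defs
  imports Main
begin

text \<open>An abstract system of proof notations on a carrier type 'a (the set D is the whole type):
  size sz, height ht (both positive) and a reduction relation st that strictly decreases height.\<close>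
definition proof_notation_system ::
  "('a \<Rightarrow> nat) \<Rightarrow> ('a \<Rightarrow> nat) \<Rightarrow> ('a \<Rightarrow> 'a \<Rightarrow> bool) \<Rightarrow> bool" where
  "proof_notation_system sz ht st \<longleftrightarrow>
     (\<forall>d. sz d > 0 \<and> ht d > 0) \<and> (\<forall>d d'. st d d' \<longrightarrow> ht d' < ht d)"

datatype 'a eterm = Base 'a | Iop "'a eterm" | Rop "'a eterm" "'a eterm" | Eop "'a eterm"

fun esize :: "('a \<Rightarrow> nat) \<Rightarrow> 'a eterm \<Rightarrow> nat" where
  "esize sz (Base d) = sz d"
| "esize sz (Iop d) = esize sz d + 1"
| "esize sz (Rop d e) = esize sz d + esize sz e + 1"
| "esize sz (Eop d) = esize sz d + 1"

fun eheight :: "('a \<Rightarrow> nat) \<Rightarrow> 'a eterm \<Rightarrow> nat" where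
  "eheight ht (Base d) = ht d"
| "eheight ht (Iop d) = eheight ht d"
| "eheight ht (Rop d e) = eheight ht d + eheight ht e"
| "eheight ht (Eop d) = 2 ^ eheight ht d - 1"

inductive estep :: "('a \<Rightarrow> 'a \<Rightarrow> bool) \<Rightarrow> 'a eterm \<Rightarrow> 'a eterm \<Rightarrow> bool" for st where
  base: "st d d' \<Longrightarrow> estep st (Base d) (Base d')"
| icong: "estep st d d' \<Longrightarrow> estep st (Iop d) (Iop d')"
| rcong: "estep st e e' \<Longrightarrow> estep st (Rop d e) (Rop d e')"
| econg: "estep st d d' \<Longrightarrow> estep st (Eop d) (Eop d')"
| rred: "estep st (Rop d e) (Iop d)"
| ered: "estep st d d' \<Longrightarrow> estep st d d'' \<Longrightarrow> estep st (Eop d) (Rop (Eop d') (Eop d''))"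

definition bounded_in :: "('b \<Rightarrow> nat) \<Rightarrow> ('b \<Rightarrow> 'b \<Rightarrow> bool) \<Rightarrow> nat \<Rightarrow> 'b \<Rightarrow> bool" where
  "bounded_in sz st t x \<longleftrightarrow> (\<forall>x'. st\<^sup>*\<^sup>* x x' \<longrightarrow> sz x' \<le> t)"

fun tower :: "nat \<Rightarrow> nat \<Rightarrow> nat" where
  "tower 0 x = x"
| "tower (Suc n) x = 2 ^ tower n x"

end

theory Submission
  imports Defs
begin

text \<open>Let \<open>x\<close> be \<open>S\<close>-bounded of height \<open>H\<close>. Every reduct of \<open>E x\<close> is a right-nested spine
  \<open>R (E y\<^sub>1) (R (E y\<^sub>2) (\<dots> I\<^sup>j (E y)))\<close> with all \<open>y\<^sub>i, y\<close> reducts of \<open>x\<close>, and unfolding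
  an \<open>E y\<close> only produces \<open>E\<close>'s of strictly smaller height. Charging \<open>S + 2\<close> per unit of height
  gives a potential that dominates the size and never increases, so \<open>E x\<close> is
  \<open>((S + 2) H - 1)\<close>-bounded. Iterating from \<open>d\<close>, the height \<open>H\<^sub>k\<close> of \<open>E\<^sup>kd\<close> satisfies
  \<open>(H\<^sub>k + 1)\<^sup>2 \<le> 2^(2\<^sub>k\<^sub>-\<^sub>1(2h))\<close>, which keeps the bound below \<open>2\<^sub>k\<^sub>-\<^sub>1(2h) \<cdot> s\<close>.\<close>

lemma bounded_in_mono: "bounded_in sz st t x \<Longrightarrow> t \<le> t' \<Longrightarrow> bounded_in sz st t' x"
  unfolding bounded_in_def by fastforce

lemma rtranclp_estep_Base:
  "(estep st)\<^sup>*\<^sup>* (Base d) u \<Longrightarrow> \<exists>d'. u = Base d' \<and> st\<^sup>*\<^sup>* d d'"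
proof (induction rule: rtranclp_induct)
  case (step y z)
  then obtain d' where "y = Base d'" "st\<^sup>*\<^sup>* d d'" by blast
  with step(2) show ?case by (auto elim: estep.cases)
qed auto

lemma bounded_in_Base:
  "bounded_in sz st s d \<Longrightarrow> bounded_in (esize sz) (estep st) s (Base d)"
  unfolding bounded_in_def by (auto dest: rtranclp_estep_Base)

lemma two_pow_add_lt:
  fixes a b c :: nat
  assumes "a < c" "b < c"
  shows "(2^a - 1) + (2^b - 1) < (2^c - 1 :: nat)"
proof -
  have "(2::nat)^a \<le> 2^(c-1)" "(2::nat)^b \<le> 2^(c-1)"
    using assms by (auto intro: power_increasing)
  moreover have "(2::nat)^c = 2^(c-1) + 2^(c-1)"
    using assms by (cases c) auto
  moreover have "(1::nat) \<le> 2^a" "(1::nat) \<le> 2^b" by auto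
  ultimately show ?thesis by linarith
qed

locale proof_notations =
  fixes sz ht :: "'a \<Rightarrow> nat" and st :: "'a \<Rightarrow> 'a \<Rightarrow> bool"
  assumes system: "proof_notation_system sz ht st"
begin

lemma ht_pos: "ht d > 0"
  using system unfolding proof_notation_system_def by blast

lemma ht_less: "st d d' \<Longrightarrow> ht d' < ht d"
  using system unfolding proof_notation_system_def by blast

lemma eheight_pos: "eheight ht t > 0"
proof (induction t)
  case (Eop t)
  then show ?case using one_less_power[of "2::nat" "eheight ht t"] by simp
qed (auto simp: ht_pos)

lemma estep_eheight_less: "estep st x y \<Longrightarrow> eheight ht y < eheight ht x"
proof (induction rule: estep.induct)
  case (econg d d')
  then have "(2::nat) ^ eheight ht d' < 2 ^ eheight ht d" by simp
  then show ?case by (simp add: diff_less_mono)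
next
  case (rred d e)
  show ?case using eheight_pos[of e] by simp
next
  case (ered d d' d'')
  then show ?case using two_pow_add_lt[of "eheight ht d'" "eheight ht d" "eheight ht d''"] by simp
qed (auto simp: ht_less)

inductive spine :: "'a eterm \<Rightarrow> 'a eterm \<Rightarrow> bool" for x where
  spine_Eop: "(estep st)\<^sup>*\<^sup>* x y \<Longrightarrow> spine x (Eop y)"
| spine_Iop: "spine x u \<Longrightarrow> spine x (Iop u)"
| spine_Rop: "(estep st)\<^sup>*\<^sup>* x y \<Longrightarrow> spine x u \<Longrightarrow> spine x (Rop (Eop y) u)"

text \<open>On a spine, \<open>Eop y\<close> stands for at most \<open>o(y)\<close> nested \<open>Rop\<close>-nodes, each with a reduct of
  size \<open>\<le> S\<close> on the left; the value on \<open>Base\<close> is irrelevant.\<close>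
fun spine_weight :: "nat \<Rightarrow> 'a eterm \<Rightarrow> nat" where
  "spine_weight S (Base _) = 0"
| "spine_weight S (Eop y) = (S + 2) * eheight ht y - 1"
| "spine_weight S (Iop u) = spine_weight S u + 1"
| "spine_weight S (Rop u v) = max (spine_weight S u + 1) (S + 2 + spine_weight S v)"

lemma le_mult_eheight: "c \<le> c * eheight ht y"
  using mult_le_mono2[OF Suc_leI[OF eheight_pos[of y]], of c] by simp

lemma esize_le_spine_weight:
  assumes "bounded_in (esize sz) (estep st) S x" "spine x u"
  shows "esize sz u \<le> spine_weight S u"
  using assms(2)
proof induction
  case (spine_Eop y)
  have "S + 2 \<le> (S + 2) * eheight ht y" by (rule le_mult_eheight)
  with spine_Eop assms(1) show ?case unfolding bounded_in_def by fastforce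
next
  case (spine_Rop y u)
  have "S + 2 \<le> (S + 2) * eheight ht y" by (rule le_mult_eheight)
  with spine_Rop assms(1) show ?case unfolding bounded_in_def by fastforce
qed simp

lemma spine_weight_Eop_unfold:
  assumes "eheight ht y' < eheight ht y"
  shows "spine_weight S (Eop y') + (S + 2) \<le> spine_weight S (Eop y)"
proof -
  have "(S + 2) * Suc (eheight ht y') \<le> (S + 2) * eheight ht y"
    using mult_le_mono2[OF Suc_leI[OF assms]] .
  moreover have "1 \<le> (S + 2) * eheight ht y'" using le_mult_eheight[of 1 y'] by simp
  ultimately show ?thesis by simp
qed

lemma spine_estep:
  assumes "spine x u" "estep st u u'"
  shows "spine x u' \<and> spine_weight S u' \<le> spine_weight S u"
  using assms
proof (induction arbitrary: u' rule: spine.induct)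
  case (spine_Eop y)
  from spine_Eop(2) show ?case
  proof cases
    case (econg y')
    have "(S + 2) * eheight ht y' \<le> (S + 2) * eheight ht y"
      using mult_le_mono2[OF less_imp_le[OF estep_eheight_less[OF econg(2)]]] .
    with econg spine_Eop(1) show ?thesis by (auto intro: spine.intros diff_le_mono)
  next
    case (ered y' y'')
    have "(estep st)\<^sup>*\<^sup>* x y'" "(estep st)\<^sup>*\<^sup>* x y''"
      using spine_Eop(1) ered by (auto intro: rtranclp.rtrancl_into_rtrancl)
    moreover have "spine_weight S (Eop y') + (S + 2) \<le> spine_weight S (Eop y)"
      "spine_weight S (Eop y'') + (S + 2) \<le> spine_weight S (Eop y)"
      using ered(2,3) by (blast intro: spine_weight_Eop_unfold estep_eheight_less)+
    ultimately show ?thesis using ered(1) by (auto intro: spine.intros)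
  qed
next
  case (spine_Iop u)
  from spine_Iop(3) show ?case
    by cases (use spine_Iop in \<open>auto intro: spine.intros\<close>)
next
  case (spine_Rop y u)
  from spine_Rop(4) show ?case
  proof cases
    case (rcong v)
    with spine_Rop show ?thesis by (fastforce intro: spine.intros)
  next
    case rred
    with spine_Rop(1) show ?thesis by (auto intro: spine.intros)
  qed
qed

lemma bounded_in_Eop:
  assumes "bounded_in (esize sz) (estep st) S x"
  shows "bounded_in (esize sz) (estep st) ((S + 2) * eheight ht x - 1) (Eop x)"
  unfolding bounded_in_def
proof (intro allI impI)
  fix u assume "(estep st)\<^sup>*\<^sup>* (Eop x) u"
  then have "spine x u \<and> spine_weight S u \<le> spine_weight S (Eop x)"
  proof (induction rule: rtranclp_induct)
    case base
    show ?case by (auto intro: spine.intros)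
  next
    case (step v w)
    then show ?case using spine_estep[of x v w S] by auto
  qed
  then show "esize sz u \<le> (S + 2) * eheight ht x - 1"
    using esize_le_spine_weight[OF assms] by fastforce
qed

lemma eheight_funpow_Eop_le_tower:
  "2 * eheight ht ((Eop ^^ k) (Base d)) \<le> tower k (2 * ht d)"
proof (induction k)
  case (Suc k)
  define o\<^sub>k where "o\<^sub>k = eheight ht ((Eop ^^ k) (Base d))"
  have "2 * (2 ^ o\<^sub>k - 1) \<le> ((2::nat) ^ o\<^sub>k)\<^sup>2"
    by (cases "(2::nat) ^ o\<^sub>k") (auto simp: power2_eq_square)
  also have "\<dots> = 2 ^ (2 * o\<^sub>k)" by (simp add: power_mult[symmetric] mult.commute)
  also have "\<dots> \<le> 2 ^ tower k (2 * ht d)" using Suc by (simp add: o\<^sub>k_def)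
  finally show ?case by (simp add: o\<^sub>k_def)
qed simp

end

lemma sq_le_two_pow: "(a::nat) \<ge> 4 \<Longrightarrow> a\<^sup>2 \<le> 2 ^ a"
proof (induction a rule: dec_induct)
  case (step n)
  have "(Suc n)\<^sup>2 = n\<^sup>2 + 2 * n + 1" by (simp add: power2_eq_square)
  also have "\<dots> \<le> n\<^sup>2 + n\<^sup>2"
    using step(1) mult_le_mono1[OF step(1), of n] unfolding power2_eq_square by linarith
  also have "\<dots> \<le> 2 ^ Suc n" using step(3) by simp
  finally show ?case .
qed simp

lemma mult_le_two_pow:
  fixes a H :: nat
  assumes "a \<ge> 4" "(H + 1)\<^sup>2 \<le> 2 ^ a"
  shows "(a + 1) * H \<le> 2 ^ a"
proof (cases "H < a")
  case True
  then have "(a + 1) * H \<le> (a + 1) * (a - 1)" by (intro mult_le_mono2) auto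
  also have "\<dots> \<le> a\<^sup>2" using assms(1) by (cases a) (auto simp: power2_eq_square)
  finally show ?thesis using sq_le_two_pow[OF assms(1)] by linarith
next
  case False
  then have "(a + 1) * H \<le> (H + 1) * H" by (intro mult_le_mono1) auto
  also have "\<dots> \<le> (H + 1)\<^sup>2" by (simp add: power2_eq_square)
  finally show ?thesis using assms(2) by linarith
qed

lemma tower_ge: "x \<ge> 4 \<Longrightarrow> tower k x \<ge> 4"
proof (induction k)
  case (Suc k)
  then have "4 \<le> tower k x" by simp
  also have "\<dots> < 2 ^ tower k x" by (simp add: less_exp)
  finally show ?case by simp
qed simp

context proof_notations
begin

lemma bounded_in_funpow_Eop:
  assumes "s \<ge> 2" "ht d \<ge> 2" "bounded_in sz st s d"
  shows "bounded_in (esize sz) (estep st) (tower k (2 * ht d) * s) ((Eop ^^ Suc k) (Base d))"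
proof (induction k)
  case 0
  have "(s + 2) * ht d = s * ht d + 2 * ht d" by algebra
  also have "\<dots> \<le> s * ht d + s * ht d" using mult_le_mono1[OF assms(1)] by (rule add_left_mono)
  also have "\<dots> = tower 0 (2 * ht d) * s" by simp
  finally have "(s + 2) * ht d - 1 \<le> tower 0 (2 * ht d) * s" by (rule le_trans[OF diff_le_self])
  moreover have "bounded_in (esize sz) (estep st) ((s + 2) * ht d - 1) ((Eop ^^ Suc 0) (Base d))"
    using bounded_in_Eop[OF bounded_in_Base[OF assms(3)]] by simp
  ultimately show ?case by (blast intro: bounded_in_mono)
next
  case (Suc k)
  define a where "a = tower k (2 * ht d)"
  define o\<^sub>k where "o\<^sub>k = eheight ht ((Eop ^^ k) (Base d))"
  define H where "H = eheight ht ((Eop ^^ Suc k) (Base d))"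
  have "H + 1 = 2 ^ o\<^sub>k" by (simp add: H_def o\<^sub>k_def)
  then have "(H + 1)\<^sup>2 \<le> 2 ^ a"
    using eheight_funpow_Eop_le_tower[of k d]
    by (simp add: a_def o\<^sub>k_def power_mult[symmetric] mult.commute)
  then have "(a + 1) * H \<le> 2 ^ a" using mult_le_two_pow tower_ge assms(2) a_def by simp
  then have "(a * s + 2) * H \<le> 2 ^ a * s"
    using mult_le_mono1[of "a * s + 2" "(a + 1) * s" H] mult_le_mono1[of "(a + 1) * H" "2 ^ a" s] assms(1)
    by (simp add: algebra_simps)
  then show ?case
    using bounded_in_Eop[OF Suc[folded a_def]] by (auto simp: H_def a_def elim: bounded_in_mono)
qed

end

theorem mainTheorem9:
  fixes sz ht :: "'a \<Rightarrow> nat" and st :: "'a \<Rightarrow> 'a \<Rightarrow> bool"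
    and s h :: nat and d :: 'a
  assumes "proof_notation_system sz ht st"
    and "s \<ge> 2"
    and "bounded_in sz st s d"
    and "ht d = h" and "h \<ge> 2"
  shows "\<forall>k\<ge>1. bounded_in (esize sz) (estep st) (tower (k - 1) (2 * h) * s) ((Eop ^^ k) (Base d))"
proof (intro allI impI)
  interpret proof_notations sz ht st by (intro proof_notations.intro assms(1))
  fix k :: nat assume "k \<ge> 1"
  then obtain j where "k = Suc j" by (cases k) auto
  then show "bounded_in (esize sz) (estep st) (tower (k - 1) (2 * h) * s) ((Eop ^^ k) (Base d))"
    using bounded_in_funpow_Eop[of s d j] assms by simp
qed

end
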